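(* Let $G$ be a search game (as defined in the context) with ordinally consistent and solitary-search dominant payoffs. Then there exists a pure Nash equilibrium $s$ of $G$ that is socially optimal, i.e., $U(s)=U_{\mathrm{opt}}$.
   Context: A search game $G=(N,\Omega,\Pi,\mu,K,c,v)$ consists of: a finite set of players $N=\{1,\ldots,n\}$; a finite set $\Omega$ of locations; for each player $i$ a partition $\Pi_i$ of $\Omega$, with $\pi_i(\omega)$ the cell containing $\omega$; a common prior $\mu\in\Delta(\Omega)$ with $\mu(\pi_i)>0$ for every cell of every player, and $\mu(\omega|\pi_i)=\mu(\omega)/\mu(\pi_i)$ for $\omega\in\pi_i$; capacities $K_i\in\mathbb{N}$; costs $c_i:\{0,\ldots,K_i\}\to\mathbb{R}_{\ge0}$ with $c_i(0)=0$ and nondecreasing increments $c_i(k+1)-c_i(k)\ge c_i(k)-c_i(k-1)$; rewards $v_i^m(\omega)\ge0$ ($m$ = number of finders including $i$) with $v_i^{m+1}(\omega)\le v_i^m(\omega)$; social values $v_{\mathfrak{s}}(\omega)\ge0$. A pure strategy $s_i$ assigns to each cell $\pi_i$ a subset $s_i(\pi_i)\subseteq\pi_i$ of size at most $K_i$; $S$ is the set of pure profiles. With $m_s(\omega)=\sum_{i}\mathbf{1}_{\omega\in s_i(\pi_i(\omega))}$, player $i$'s payoff is $u_i(s)=\sum_{\omega}\mu(\omega)\big[\mathbf{1}_{\omega\in s_i(\pi_i(\omega))}v_i^{m_s(\omega)}(\omega)-c_i(|s_i(\pi_i(\omega))|)\big]$; a pure Nash equilibrium is a pure profile from which no player gains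 by a unilateral deviation to another pure strategy. The social payoff is $U(s)=\sum_{\omega}\mu(\omega)v_{\mathfrak{s}}(\omega)\mathbf{1}_{m_s(\omega)\ge1}$ and $U_{\mathrm{opt}}=\max_{s\in S}U(s)$. Payoffs are ordinally consistent if for every player $i$, every cell $\pi_i\in\Pi_i$ and all $\omega,\omega'\in\pi_i$: $\mu(\omega)v_i^1(\omega)<\mu(\omega')v_i^1(\omega')$ implies $\mu(\omega)v_{\mathfrak{s}}(\omega)\le\mu(\omega')v_{\mathfrak{s}}(\omega')$. Payoffs are solitary-search dominant if for every player $i$, every cell $\pi_i\in\Pi_i$ and all $\omega,\omega'\in\pi_i$: $\mu(\omega|\pi_i)v_i^1(\omega)\ge\mu(\omega'|\pi_i)v_i^2(\omega')$ and $\mu(\omega|\pi_i)v_i^1(\omega)\ge c_i(K_i)-c_i(K_i-1)$. *)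

theory Defs
  imports Complex_Main
begin

text \<open>Players are the elements of a finite type 'p (so n = card (UNIV :: 'p set)), locations the
elements of a finite type 'w (so Omega = UNIV).  The partition of player i is given by
the cell map part i, where part i w is the cell containing w.  A (pure) strategy of
player i is a map from cells to subsets of them; on sets that are not cells of player i
it is required to be empty (canonical representation).\<close>

definition is_partition_map :: "('w \<Rightarrow> 'w set) \<Rightarrow> bool" where
  "is_partition_map P \<longleftrightarrow> (\<forall>w. w \<in> P w) \<and> (\<forall>w w'. w' \<in> P w \<longrightarrow> P w' = P w)"

definition search_game ::
  "('p::finite \<Rightarrow> 'w::finite \<Rightarrow> 'w set) \<Rightarrow> ('w \<Rightarrow> real) \<Rightarrow> ('p \<Rightarrow> nat)
   \<Rightarrow> ('p \<Rightarrow> nat \<Rightarrow> real) \<Rightarrow> ('p \<Rightarrow> nat \<Rightarrow> 'w \<Rightarrow> real) \<Rightarrow> ('w \<Rightarrow> real) \<Rightarrow> bool" where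
  "search_game part \<mu> K c v vs \<longleftrightarrow>
     (\<forall>i. is_partition_map (part i)) \<and>
     (\<forall>w. \<mu> w \<ge> 0) \<and> (\<Sum>w\<in>UNIV. \<mu> w) = 1 \<and>
     (\<forall>i w. (\<Sum>w'\<in>part i w. \<mu> w') > 0) \<and>
     (\<forall>i. K i \<ge> 1) \<and>
     (\<forall>i. c i 0 = 0) \<and> (\<forall>i k. k \<le> K i \<longrightarrow> c i k \<ge> 0) \<and>
     (\<forall>i k. 1 \<le> k \<and> k + 1 \<le> K i \<longrightarrow> c i (k + 1) - c i k \<ge> c i k - c i (k - 1)) \<and>
     (\<forall>i m w. 1 \<le> m \<and> m \<le> card (UNIV :: 'p set) \<longrightarrow> v i m w \<ge> 0) \<and>
     (\<forall>i m w. 1 \<le> m \<and> m < card (UNIV :: 'p set) \<longrightarrow> v i (m + 1) w \<le> v i m w) \<and>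
     (\<forall>w. vs w \<ge> 0)"

definition cond_prob :: "('p \<Rightarrow> 'w::finite \<Rightarrow> 'w set) \<Rightarrow> ('w \<Rightarrow> real) \<Rightarrow> 'p \<Rightarrow> 'w \<Rightarrow> real" where
  "cond_prob part \<mu> i w = \<mu> w / (\<Sum>w'\<in>part i w. \<mu> w')"

definition pure_strategy ::
  "('p \<Rightarrow> 'w \<Rightarrow> 'w set) \<Rightarrow> ('p \<Rightarrow> nat) \<Rightarrow> 'p \<Rightarrow> ('w set \<Rightarrow> 'w set) \<Rightarrow> bool" where
  "pure_strategy part K i \<sigma> \<longleftrightarrow>
     (\<forall>w. \<sigma> (part i w) \<subseteq> part i w \<and> card (\<sigma> (part i w)) \<le> K i) \<and>
     (\<forall>C. C \<notin> range (part i) \<longrightarrow> \<sigma> C = {})"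

definition pure_profiles ::
  "('p \<Rightarrow> 'w \<Rightarrow> 'w set) \<Rightarrow> ('p \<Rightarrow> nat) \<Rightarrow> ('p \<Rightarrow> 'w set \<Rightarrow> 'w set) set" where
  "pure_profiles part K = {s. \<forall>i. pure_strategy part K i (s i)}"

definition finders ::
  "('p::finite \<Rightarrow> 'w \<Rightarrow> 'w set) \<Rightarrow> ('p \<Rightarrow> 'w set \<Rightarrow> 'w set) \<Rightarrow> 'w \<Rightarrow> nat" where
  "finders part s w = card {i. w \<in> s i (part i w)}"

definition payoff ::
  "('p::finite \<Rightarrow> 'w::finite \<Rightarrow> 'w set) \<Rightarrow> ('w \<Rightarrow> real) \<Rightarrow> ('p \<Rightarrow> nat \<Rightarrow> real)
   \<Rightarrow> ('p \<Rightarrow> nat \<Rightarrow> 'w \<Rightarrow> real) \<Rightarrow> 'p \<Rightarrow> ('p \<Rightarrow> 'w set \<Rightarrow> 'w set) \<Rightarrow> real" where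
  "payoff part \<mu> c v i s =
     (\<Sum>w\<in>UNIV. \<mu> w * ((if w \<in> s i (part i w) then v i (finders part s w) w else 0)
                         - c i (card (s i (part i w)))))"

definition pure_nash ::
  "('p::finite \<Rightarrow> 'w::finite \<Rightarrow> 'w set) \<Rightarrow> ('w \<Rightarrow> real) \<Rightarrow> ('p \<Rightarrow> nat)
   \<Rightarrow> ('p \<Rightarrow> nat \<Rightarrow> real) \<Rightarrow> ('p \<Rightarrow> nat \<Rightarrow> 'w \<Rightarrow> real) \<Rightarrow> ('p \<Rightarrow> 'w set \<Rightarrow> 'w set) \<Rightarrow> bool" where
  "pure_nash part \<mu> K c v s \<longleftrightarrow> s \<in> pure_profiles part K \<and>
     (\<forall>i \<sigma>. pure_strategy part K i \<sigma> \<longrightarrow> payoff part \<mu> c v i (s(i := \<sigma>)) \<le> payoff part \<mu> c v i s)"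

definition social_payoff ::
  "('p::finite \<Rightarrow> 'w::finite \<Rightarrow> 'w set) \<Rightarrow> ('w \<Rightarrow> real) \<Rightarrow> ('w \<Rightarrow> real) \<Rightarrow> ('p \<Rightarrow> 'w set \<Rightarrow> 'w set) \<Rightarrow> real" where
  "social_payoff part \<mu> vs s = (\<Sum>w\<in>UNIV. \<mu> w * vs w * (if finders part s w \<ge> 1 then 1 else 0))"

definition U_opt ::
  "('p::finite \<Rightarrow> 'w::finite \<Rightarrow> 'w set) \<Rightarrow> ('w \<Rightarrow> real) \<Rightarrow> ('p \<Rightarrow> nat) \<Rightarrow> ('w \<Rightarrow> real) \<Rightarrow> real" where
  "U_opt part \<mu> K vs = Max (social_payoff part \<mu> vs ` pure_profiles part K)"

definition ordinally_consistent ::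
  "('p \<Rightarrow> 'w \<Rightarrow> 'w set) \<Rightarrow> ('w \<Rightarrow> real) \<Rightarrow> ('p \<Rightarrow> nat \<Rightarrow> 'w \<Rightarrow> real) \<Rightarrow> ('w \<Rightarrow> real) \<Rightarrow> bool" where
  "ordinally_consistent part \<mu> v vs \<longleftrightarrow>
     (\<forall>i w w'. w' \<in> part i w \<longrightarrow> \<mu> w * v i 1 w < \<mu> w' * v i 1 w'
        \<longrightarrow> \<mu> w * vs w \<le> \<mu> w' * vs w')"

definition solitary_search_dominant ::
  "('p \<Rightarrow> 'w::finite \<Rightarrow> 'w set) \<Rightarrow> ('w \<Rightarrow> real) \<Rightarrow> ('p \<Rightarrow> nat) \<Rightarrow> ('p \<Rightarrow> nat \<Rightarrow> real)
   \<Rightarrow> ('p \<Rightarrow> nat \<Rightarrow> 'w \<Rightarrow> real) \<Rightarrow> bool" where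
  "solitary_search_dominant part \<mu> K c v \<longleftrightarrow>
     (\<forall>i w w'. w' \<in> part i w \<longrightarrow>
        cond_prob part \<mu> i w * v i 1 w \<ge> cond_prob part \<mu> i w' * v i 2 w' \<and>
        cond_prob part \<mu> i w * v i 1 w \<ge> c i (K i) - c i (K i - 1))"

end

theory Submission
  imports Defs "HOL-Library.Product_Lexorder"
begin

(* Among the socially optimal pure profiles choose one with the fewest searches and, among those,
   the largest total solitary value mu(w) v_i^1(w) of the searched locations.  Then no location is
   searched twice, and ordinal consistency and solitary-search dominance make every player
   best-respond, cell by cell, among sets of at most as many locations as he searches.  Payoffs
   separate over cells, and under convex costs best replies are characterised by local add, drop
   and swap conditions.  Raising one such capacity by one lets a player add at most one location;
   the extra searcher so created is passed on by single swaps, each increasing a potential, until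
   somebody drops it.  Along the way no location ever loses searchers, so once all capacities reach
   K the resulting pure Nash equilibrium finds everything the optimum finds. *)

lemma ex_max_on_finite:
  fixes f :: "'a \<Rightarrow> 'b::linorder"
  assumes "finite A" "A \<noteq> {}"
  shows "\<exists>x\<in>A. \<forall>y\<in>A. f y \<le> f x"
proof -
  from assms have "Max (f ` A) \<in> f ` A" by (intro Max_in) auto
  then obtain x where x: "Max (f ` A) = f x" "x \<in> A" by (rule imageE)
  have "f y \<le> f x" if "y \<in> A" for y
    using x that assms(1) by (metis Max_ge finite_imageI imageI)
  then show ?thesis using x(2) by blast
qed

lemma sum_sum_fun_upd:
  fixes \<phi> :: "'i \<Rightarrow> 'a \<Rightarrow> 'r::comm_monoid_add"
  assumes "finite I" "b \<in> I" "finite (D b)" "C \<in> D b"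
  shows "(\<Sum>i\<in>I. \<Sum>x\<in>D i. \<phi> i ((s(b := (s b)(C := t))) i x)) + \<phi> b (s b C) =
    (\<Sum>i\<in>I. \<Sum>x\<in>D i. \<phi> i (s i x)) + \<phi> b t"
proof -
  let ?s' = "s(b := (s b)(C := t))"
  have "(\<Sum>x\<in>D b - {C}. \<phi> b (?s' b x)) = (\<Sum>x\<in>D b - {C}. \<phi> b (s b x))"
    by (intro sum.cong) auto
  then have inner: "(\<Sum>x\<in>D b. \<phi> b (?s' b x)) + \<phi> b (s b C) = (\<Sum>x\<in>D b. \<phi> b (s b x)) + \<phi> b t"
    using sum.remove[OF assms(3,4), of "\<lambda>x. \<phi> b (?s' b x)"] sum.remove[OF assms(3,4), of "\<lambda>x. \<phi> b (s b x)"]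
    by (simp add: ac_simps)
  let ?R = "\<Sum>i\<in>I - {b}. \<Sum>x\<in>D i. \<phi> i (s i x)"
  have "(\<Sum>i\<in>I - {b}. \<Sum>x\<in>D i. \<phi> i (?s' i x)) = ?R"
    by (intro sum.cong) auto
  then have "(\<Sum>i\<in>I. \<Sum>x\<in>D i. \<phi> i (?s' i x)) + \<phi> b (s b C) =
      ((\<Sum>x\<in>D b. \<phi> b (?s' b x)) + \<phi> b (s b C)) + ?R"
    using sum.remove[OF assms(1,2), of "\<lambda>i. \<Sum>x\<in>D i. \<phi> i (?s' i x)"] by (simp only: ac_simps)
  also have "\<dots> = ((\<Sum>x\<in>D b. \<phi> b (s b x)) + \<phi> b t) + ?R"
    by (simp only: inner)
  also have "\<dots> = (\<Sum>i\<in>I. \<Sum>x\<in>D i. \<phi> i (s i x)) + \<phi> b t"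
    using sum.remove[OF assms(1,2), of "\<lambda>i. \<Sum>x\<in>D i. \<phi> i (s i x)"] by (simp only: ac_simps)
  finally show ?thesis .
qed

lemma sum_change_two:
  fixes g g' :: "'a \<Rightarrow> 'b::ab_group_add"
  assumes "finite A" "x \<in> A" "y \<in> A" "x \<noteq> y" "\<And>w. w \<noteq> x \<Longrightarrow> w \<noteq> y \<Longrightarrow> g' w = g w"
  shows "sum g' A = sum g A - g x - g y + g' x + g' y"
proof -
  have "sum g' (A - {x, y}) = sum g (A - {x, y})" using assms(5) by (intro sum.cong) auto
  moreover have "sum u A = sum u (A - {x, y}) + u x + u y" for u :: "'a \<Rightarrow> 'b"
    using sum.subset_diff[of "{x, y}" A u] assms(1-4) by (simp add: add.assoc)
  ultimately show ?thesis by (simp add: algebra_simps)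
qed

section \<open>Optimal subsets under convex costs\<close>

definition convex_upto :: "(nat \<Rightarrow> real) \<Rightarrow> nat \<Rightarrow> bool" where
  "convex_upto h K \<longleftrightarrow> (\<forall>j. 1 \<le> j \<and> j + 1 \<le> K \<longrightarrow> h j - h (j - 1) \<le> h (j + 1) - h j)"

lemma convex_upto_scale:
  assumes "convex_upto h K" "0 \<le> a"
  shows "convex_upto (\<lambda>k. a * h k) K"
  using assms unfolding convex_upto_def
  by (auto simp: right_diff_distrib[symmetric] intro: mult_left_mono)

lemma convex_upto_increment_mono:
  assumes "convex_upto h K" "1 \<le> i" "i \<le> j" "j \<le> K"
  shows "h i - h (i - 1) \<le> h j - h (j - 1)"
  using assms(3,4)
proof (induction j rule: dec_induct)
  case (step n)
  have "h n - h (n - 1) \<le> h (n + 1) - h n"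
    using assms(1,2) step.hyps step.prems unfolding convex_upto_def by simp
  with step show ?case by simp
qed simp

lemma convex_upto_diff_le:
  assumes "convex_upto h K" "j \<le> m" "1 \<le> m" "m \<le> K"
  shows "h m - h j \<le> real (m - j) * (h m - h (m - 1))"
proof -
  have "h m - h j = (\<Sum>i = j..<m. h (Suc i) - h i)"
    using sum_Suc_diff'[OF assms(2), of h] by simp
  also have "\<dots> \<le> real (card {j..<m}) * (h m - h (m - 1))"
    by (rule sum_bounded_above)
      (use convex_upto_increment_mono[OF assms(1), of "Suc _" m] assms in auto)
  finally show ?thesis by simp
qed

lemma convex_upto_diff_ge:
  assumes "convex_upto h K" "m < t" "t \<le> K"
  shows "real (t - m) * (h (m + 1) - h m) \<le> h t - h m"
proof -
  have "real (card {m..<t}) * (h (m + 1) - h m) \<le> (\<Sum>i = m..<t. h (Suc i) - h i)"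
    by (rule sum_bounded_below)
      (use convex_upto_increment_mono[OF assms(1), of "Suc m" "Suc _"] assms in auto)
  also have "\<dots> = h t - h m"
    using sum_Suc_diff'[of m t h] assms(2) by simp
  finally show ?thesis by simp
qed

lemma sum_diff_le_threshold:
  fixes f :: "'a \<Rightarrow> real"
  assumes "finite S" "finite T"
    and "\<And>x. x \<in> S - T \<Longrightarrow> a \<le> f x" "\<And>y. y \<in> T - S \<Longrightarrow> f y \<le> a"
  shows "sum f T - sum f S \<le> (real (card T) - real (card S)) * a"
proof -
  have "real (card (S - T)) * a \<le> sum f (S - T)"
    by (rule sum_bounded_below) (use assms(3) in auto)
  moreover have "sum f (T - S) \<le> real (card (T - S)) * a"
    by (rule sum_bounded_above) (use assms(4) in auto)
  moreover have "sum f T = sum f (T \<inter> S) + sum f (T - S)" "sum f S = sum f (T \<inter> S) + sum f (S - T)"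
    using sum.Int_Diff[OF assms(2), of f S] sum.Int_Diff[OF assms(1), of f T]
    by (simp_all add: Int_commute)
  moreover have "card T = card (T \<inter> S) + card (T - S)" "card S = card (T \<inter> S) + card (S - T)"
    using card_Int_Diff[OF assms(2), of S] card_Int_Diff[OF assms(1), of T]
    by (simp_all add: Int_commute)
  ultimately show ?thesis by (simp add: algebra_simps)
qed

definition optimal_subset :: "'a set \<Rightarrow> nat \<Rightarrow> ('a \<Rightarrow> real) \<Rightarrow> (nat \<Rightarrow> real) \<Rightarrow> 'a set \<Rightarrow> bool" where
  "optimal_subset C k f h S \<longleftrightarrow> S \<subseteq> C \<and> card S \<le> k \<and>
     (\<forall>T. T \<subseteq> C \<and> card T \<le> k \<longrightarrow> sum f T - h (card T) \<le> sum f S - h (card S))"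

lemma optimal_subsetI:
  fixes f :: "'a \<Rightarrow> real"
  assumes "finite C" and h: "convex_upto h K" and "k \<le> K" and "S \<subseteq> C" "card S \<le> k"
    and grow: "\<And>y. y \<in> C - S \<Longrightarrow> card S < k \<Longrightarrow> f y \<le> h (card S + 1) - h (card S)"
    and shrink: "\<And>x. x \<in> S \<Longrightarrow> h (card S) - h (card S - 1) \<le> f x"
    and exchange: "\<And>x y. x \<in> S \<Longrightarrow> y \<in> C - S \<Longrightarrow> f y \<le> f x"
  shows "optimal_subset C k f h S"
  unfolding optimal_subset_def
proof (intro conjI allI impI)
  fix T assume T: "T \<subseteq> C \<and> card T \<le> k"
  have fin: "finite S" "finite T" using assms(1,4) T finite_subset by auto
  show "sum f T - h (card T) \<le> sum f S - h (card S)"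
  proof (cases "card T \<le> card S")
    case le: True
    show ?thesis
    proof (cases "S - T = {}")
      case True
      then have "T = S" using le fin by (metis Diff_eq_empty_iff card_mono card_subset_eq le_antisym)
      then show ?thesis by simp
    next
      case False
      then obtain x0 where x0: "x0 \<in> S - T" "\<forall>x\<in>S - T. f x0 \<le> f x"
        using ex_max_on_finite[of "S - T" "\<lambda>x. - f x"] fin by auto
      have "1 \<le> card S" using x0(1) fin by (auto simp: Suc_le_eq card_gt_0_iff)
      have "sum f T - sum f S \<le> (real (card T) - real (card S)) * f x0"
        by (rule sum_diff_le_threshold) (use fin x0 exchange T in auto)
      moreover have "h (card S) - h (card T) \<le> real (card S - card T) * (h (card S) - h (card S - 1))"
        using convex_upto_diff_le[OF h le \<open>1 \<le> card S\<close>] assms(3,5) by simp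
      moreover have "real (card S - card T) * (h (card S) - h (card S - 1)) \<le> real (card S - card T) * f x0"
        using shrink x0(1) by (intro mult_left_mono) auto
      ultimately show ?thesis using le by (simp add: of_nat_diff algebra_simps)
    qed
  next
    case gt: False
    then have "T - S \<noteq> {}" using fin by (metis Diff_eq_empty_iff card_mono)
    then obtain y0 where y0: "y0 \<in> T - S" "\<forall>y\<in>T - S. f y \<le> f y0"
      using ex_max_on_finite[of "T - S" f] fin by auto
    have "sum f T - sum f S \<le> (real (card T) - real (card S)) * f y0"
      by (rule sum_diff_le_threshold) (use fin y0 exchange T in auto)
    moreover have "real (card T - card S) * (h (card S + 1) - h (card S)) \<le> h (card T) - h (card S)"
      using convex_upto_diff_ge[OF h] gt T assms(3) by simp
    moreover have "real (card T - card S) * f y0 \<le> real (card T - card S) * (h (card S + 1) - h (card S))"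
      using grow y0(1) gt T by (intro mult_left_mono) auto
    ultimately show ?thesis using gt by (simp add: of_nat_diff algebra_simps)
  qed
qed (use assms in auto)

lemma optimal_subset_grow:
  assumes "optimal_subset C k f h S" "finite C" "y \<in> C - S" "card S < k"
  shows "f y \<le> h (card S + 1) - h (card S)"
proof -
  have "finite S" using assms(1,2) finite_subset unfolding optimal_subset_def by blast
  moreover from this have "insert y S \<subseteq> C" "card (insert y S) \<le> k"
    using assms unfolding optimal_subset_def by auto
  then have "sum f (insert y S) - h (card (insert y S)) \<le> sum f S - h (card S)"
    using assms(1) unfolding optimal_subset_def by blast
  ultimately show ?thesis using assms(3) by simp
qed

lemma optimal_subset_shrink:
  assumes "optimal_subset C k f h S" "finite C" "x \<in> S"
  shows "h (card S) - h (card S - 1) \<le> f x"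
proof -
  have "finite S" using assms(1,2) finite_subset unfolding optimal_subset_def by blast
  moreover have "sum f (S - {x}) - h (card (S - {x})) \<le> sum f S - h (card S)"
    using assms card_Diff1_le[of S x] unfolding optimal_subset_def by (meson Diff_subset order.trans)
  ultimately show ?thesis using assms(3) by (simp add: sum_diff1)
qed

lemma optimal_subset_exchange:
  assumes "optimal_subset C k f h S" "finite C" "x \<in> S" "y \<in> C - S"
  shows "f y \<le> f x"
proof -
  have "finite S" "S \<subseteq> C" "card S \<le> k" using assms(1,2) finite_subset unfolding optimal_subset_def by blast+
  moreover have "card (insert y (S - {x})) = card S"
    using \<open>finite S\<close> assms(3,4) card_Suc_Diff1 by fastforce
  ultimately have "sum f (insert y (S - {x})) - h (card S) \<le> sum f S - h (card S)"
    using assms unfolding optimal_subset_def by (metis Diff_subset insert_subset subset_trans DiffD1)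
  then show ?thesis using \<open>finite S\<close> assms(3,4) by (simp add: sum_diff1)
qed

lemma optimal_subset_mono:
  assumes "optimal_subset C k f h S" "finite C"
    and "\<And>w. w \<in> S \<Longrightarrow> f w \<le> g w" "\<And>w. w \<in> C - S \<Longrightarrow> g w \<le> f w"
  shows "optimal_subset C k g h S"
  unfolding optimal_subset_def
proof (intro conjI allI impI)
  show "S \<subseteq> C" "card S \<le> k" using assms(1) unfolding optimal_subset_def by auto
  fix T assume T: "T \<subseteq> C \<and> card T \<le> k"
  have fin: "finite S" "finite T" using \<open>S \<subseteq> C\<close> T assms(2) finite_subset by auto
  have "sum f T - h (card T) \<le> sum f S - h (card S)" using assms(1) T unfolding optimal_subset_def by auto
  moreover have "sum g (T - S) \<le> sum f (T - S)" using assms(4) T by (intro sum_mono) auto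
  moreover have "sum f (S - T) \<le> sum g (S - T)" using assms(3) by (intro sum_mono) auto
  moreover have "sum u T - sum u S = sum u (T - S) - sum u (S - T)" for u :: "'a \<Rightarrow> real"
    using sum.Int_Diff[OF fin(2), of u S] sum.Int_Diff[OF fin(1), of u T] by (simp add: Int_commute)
  ultimately show "sum g T - h (card T) \<le> sum g S - h (card S)" by (smt (verit))
qed

lemma optimal_subset_capacity_Suc:
  fixes f :: "'a \<Rightarrow> real"
  assumes "finite C" and h: "convex_upto h K" and opt: "optimal_subset C k f h S" and "k < K"
  shows "optimal_subset C (Suc k) f h S \<or> (\<exists>y\<in>C - S. optimal_subset C (Suc k) f h (insert y S))"
proof -
  have S: "S \<subseteq> C" "card S \<le> k" "finite S"
    using opt \<open>finite C\<close> finite_subset unfolding optimal_subset_def by auto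
  note shrink = optimal_subset_shrink[OF opt \<open>finite C\<close>]
    and exchange = optimal_subset_exchange[OF opt \<open>finite C\<close>]
  show ?thesis
  proof (cases "\<forall>y\<in>C - S. f y \<le> h (card S + 1) - h (card S)")
    case True
    then have "optimal_subset C (Suc k) f h S"
      using S shrink exchange by (intro optimal_subsetI[OF \<open>finite C\<close> h Suc_leI[OF \<open>k < K\<close>]]) auto
    then show ?thesis ..
  next
    case False
    then obtain y1 where y1: "y1 \<in> C - S" "h (card S + 1) - h (card S) < f y1" by auto
    then have "card S = k"
      using optimal_subset_grow[OF opt \<open>finite C\<close> y1(1)] S(2) by fastforce
    obtain y where y: "y \<in> C - S" "\<forall>z\<in>C - S. f z \<le> f y"
      using ex_max_on_finite[of "C - S" f] y1(1) \<open>finite C\<close> by auto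
    have card: "card (insert y S) = Suc k" using y(1) S(3) \<open>card S = k\<close> by simp
    have "optimal_subset C (Suc k) f h (insert y S)"
    proof (rule optimal_subsetI[OF \<open>finite C\<close> h Suc_leI[OF \<open>k < K\<close>]])
      show "insert y S \<subseteq> C" "card (insert y S) \<le> Suc k" using y(1) S(1) card by auto
      show "f z \<le> h (card (insert y S) + 1) - h (card (insert y S))"
        if "z \<in> C - insert y S" "card (insert y S) < Suc k" for z
        using that card by simp
      show "h (card (insert y S)) - h (card (insert y S) - 1) \<le> f x" if "x \<in> insert y S" for x
      proof -
        have "h (card (insert y S)) - h (card (insert y S) - 1) < f y"
          using card \<open>card S = k\<close> y1 y(2) by force
        also have "f y \<le> f x" using that exchange[OF _ y(1)] by auto
        finally show ?thesis by simp
      qed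
      show "f z \<le> f x" if "x \<in> insert y S" "z \<in> C - insert y S" for x z
        using that y(2) exchange[of x z] by auto
    qed
    then show ?thesis using y(1) by blast
  qed
qed

lemma optimal_subset_combine:
  fixes f f' :: "'a \<Rightarrow> real"
  assumes "finite C" and opt: "optimal_subset C k f' h S" and "h0 \<in> S"
    and agree: "\<And>w. w \<noteq> h0 \<Longrightarrow> f w = f' w"
    and opt': "optimal_subset (C - {h0}) k f h S'"
  shows "optimal_subset C k f h S \<or> optimal_subset C k f h S'"
proof -
  define val where "val T = sum f T - h (card T)" for T
  have subs: "S \<subseteq> C" "card S \<le> k" "S' \<subseteq> C" "card S' \<le> k"
    using opt opt' unfolding optimal_subset_def by auto
  have shift: "sum f T = sum f' T - f' h0 + f h0" if "T \<subseteq> C" "h0 \<in> T" for T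
  proof -
    have "finite T" using that(1) \<open>finite C\<close> finite_subset by blast
    moreover have "sum f (T - {h0}) = sum f' (T - {h0})" using agree by (intro sum.cong) auto
    ultimately show ?thesis using that(2) by (simp add: sum_diff1)
  qed
  have bound: "val T \<le> max (val S) (val S')" if "T \<subseteq> C" "card T \<le> k" for T
  proof (cases "h0 \<in> T")
    case True
    then have "val T \<le> val S"
      using opt that shift[OF that(1) True] shift[OF subs(1) \<open>h0 \<in> S\<close>]
      unfolding optimal_subset_def val_def by force
    then show ?thesis by simp
  next
    case False
    then have "val T \<le> val S'" using opt' that unfolding optimal_subset_def val_def by blast
    then show ?thesis by simp
  qed
  show ?thesis
  proof (cases "val S' \<le> val S")
    case True
    then have "optimal_subset C k f h S"
      using subs bound unfolding optimal_subset_def val_def[symmetric] by (metis max.absorb1)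
    then show ?thesis ..
  next
    case False
    then have "optimal_subset C k f h S'"
      using subs bound unfolding optimal_subset_def val_def[symmetric] by (metis max.absorb2 nle_le)
    then show ?thesis ..
  qed
qed

lemma optimal_subset_remove_point:
  fixes f f' :: "'a \<Rightarrow> real"
  assumes "finite C" and h: "convex_upto h K" and "k \<le> K"
    and opt: "optimal_subset C k f' h S" and "h0 \<in> S"
    and agree: "\<And>w. w \<noteq> h0 \<Longrightarrow> f w = f' w"
    and low: "\<And>y. y \<in> C - S \<Longrightarrow> f y \<le> h (card S) - h (card S - 1)"
  shows "optimal_subset (C - {h0}) k f h (S - {h0})"
proof -
  have S: "S \<subseteq> C" "card S \<le> k" "finite S"
    using opt \<open>finite C\<close> finite_subset unfolding optimal_subset_def by auto
  have card: "card (S - {h0}) = card S - 1" "1 \<le> card S"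
    using \<open>h0 \<in> S\<close> S(3) by (auto simp: Suc_le_eq card_gt_0_iff)
  show ?thesis
  proof (rule optimal_subsetI[OF _ h \<open>k \<le> K\<close>])
    show "finite (C - {h0})" "S - {h0} \<subseteq> C - {h0}" "card (S - {h0}) \<le> k"
      using \<open>finite C\<close> S card by auto
    show "f y \<le> h (card (S - {h0}) + 1) - h (card (S - {h0}))" if "y \<in> C - {h0} - (S - {h0})" for y
      using low[of y] that card by auto
    show "h (card (S - {h0})) - h (card (S - {h0}) - 1) \<le> f x" if "x \<in> S - {h0}" for x
    proof -
      have "0 < card (S - {h0})" using that S(3) by (auto simp: card_gt_0_iff)
      then have "1 \<le> card S - 1" using card(1) by simp
      then have "h (card S - 1) - h (card S - 1 - 1) \<le> h (card S) - h (card S - 1)"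
        using convex_upto_increment_mono[OF h, of "card S - 1" "card S"] S(2) \<open>k \<le> K\<close> by simp
      also have "\<dots> \<le> f' x" using optimal_subset_shrink[OF opt \<open>finite C\<close>] that by blast
      finally show ?thesis using that agree card(1) by auto
    qed
    show "f y \<le> f x" if "x \<in> S - {h0}" "y \<in> C - {h0} - (S - {h0})" for x y
      using that optimal_subset_exchange[OF opt \<open>finite C\<close>, of x y] agree[of x] agree[of y] by auto
  qed
qed

lemma optimal_subset_swap_point:
  fixes f f' :: "'a \<Rightarrow> real"
  assumes "finite C" and h: "convex_upto h K" and "k \<le> K"
    and opt: "optimal_subset C k f' h S" and "h0 \<in> S"
    and agree: "\<And>w. w \<noteq> h0 \<Longrightarrow> f w = f' w"
    and y: "y \<in> C - S" "\<forall>z\<in>C - S. f z \<le> f y" and high: "h (card S) - h (card S - 1) < f y"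
  shows "optimal_subset (C - {h0}) k f h (insert y (S - {h0}))"
proof -
  have S: "S \<subseteq> C" "card S \<le> k" "finite S"
    using opt \<open>finite C\<close> finite_subset unfolding optimal_subset_def by auto
  have card: "card (insert y (S - {h0})) = card S"
    using \<open>h0 \<in> S\<close> y(1) S(3) card_Suc_Diff1 by fastforce
  have yh: "y \<noteq> h0" using y(1) \<open>h0 \<in> S\<close> by auto
  have above: "f z \<le> f x" if "x \<in> insert y (S - {h0})" "z \<in> C - S" for x z
  proof (cases "x = y")
    case False
    then have "x \<in> S" "x \<noteq> h0" "z \<noteq> h0" using that \<open>h0 \<in> S\<close> by auto
    then have "f' z \<le> f' x" using optimal_subset_exchange[OF opt \<open>finite C\<close> _ that(2)] by blast
    then show ?thesis using agree[OF \<open>x \<noteq> h0\<close>] agree[OF \<open>z \<noteq> h0\<close>] by simp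
  qed (use that y(2) in auto)
  show ?thesis
  proof (rule optimal_subsetI[OF _ h \<open>k \<le> K\<close>])
    show "finite (C - {h0})" "insert y (S - {h0}) \<subseteq> C - {h0}" "card (insert y (S - {h0})) \<le> k"
      using \<open>finite C\<close> S y(1) yh card by auto
    show "f z \<le> h (card (insert y (S - {h0})) + 1) - h (card (insert y (S - {h0})))"
      if "z \<in> C - {h0} - insert y (S - {h0})" "card (insert y (S - {h0})) < k" for z
      using optimal_subset_grow[OF opt \<open>finite C\<close>, of z] agree[of z] that card by auto
    show "h (card (insert y (S - {h0}))) - h (card (insert y (S - {h0})) - 1) \<le> f x"
      if "x \<in> insert y (S - {h0})" for x
      using high above[OF that y(1)] card by simp
    show "f z \<le> f x" if "x \<in> insert y (S - {h0})" "z \<in> C - {h0} - insert y (S - {h0})" for x z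
      using above[OF that(1)] that(2) by auto
  qed
qed

lemma optimal_subset_change_point:
  fixes f f' :: "'a \<Rightarrow> real"
  assumes "finite C" and h: "convex_upto h K" and "k \<le> K"
    and opt: "optimal_subset C k f' h S" and "h0 \<in> S"
    and agree: "\<And>w. w \<noteq> h0 \<Longrightarrow> f w = f' w"
  shows "optimal_subset C k f h S \<or> optimal_subset C k f h (S - {h0})
    \<or> (\<exists>y\<in>C - S. optimal_subset C k f h (insert y (S - {h0})))"
proof (cases "\<forall>y\<in>C - S. f y \<le> h (card S) - h (card S - 1)")
  case True
  then show ?thesis
    using optimal_subset_combine[OF \<open>finite C\<close> opt \<open>h0 \<in> S\<close> agree
        optimal_subset_remove_point[OF assms True[rule_format]]] by blast
next
  case False
  then obtain y1 where y1: "y1 \<in> C - S" "h (card S) - h (card S - 1) < f y1" by auto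
  obtain y where y: "y \<in> C - S" "\<forall>z\<in>C - S. f z \<le> f y"
    using ex_max_on_finite[of "C - S" f] y1(1) \<open>finite C\<close> by auto
  have "f y1 \<le> f y" using y(2) y1(1) by blast
  with y1(2) have "h (card S) - h (card S - 1) < f y" by linarith
  then show ?thesis
    using optimal_subset_combine[OF \<open>finite C\<close> opt \<open>h0 \<in> S\<close> agree
        optimal_subset_swap_point[OF assms y]] y(1) by blast
qed

section \<open>Search games\<close>

locale search_game_setting =
  fixes part :: "'p::finite \<Rightarrow> 'w::finite \<Rightarrow> 'w set"
    and \<mu> :: "'w \<Rightarrow> real" and K :: "'p \<Rightarrow> nat" and c :: "'p \<Rightarrow> nat \<Rightarrow> real"
    and v :: "'p \<Rightarrow> nat \<Rightarrow> 'w \<Rightarrow> real" and vs :: "'w \<Rightarrow> real"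
  assumes game: "search_game part \<mu> K c v vs"
begin

lemma mem_part: "w \<in> part i w"
  using game unfolding search_game_def is_partition_map_def by auto

lemma part_eq_cell: "C \<in> range (part i) \<Longrightarrow> w \<in> C \<Longrightarrow> part i w = C"
  using game unfolding search_game_def is_partition_map_def by auto

lemma mu_nonneg: "0 \<le> \<mu> w"
  using game unfolding search_game_def by auto

lemma vs_nonneg: "0 \<le> vs w"
  using game unfolding search_game_def by auto

lemma cell_mass_pos: "C \<in> range (part i) \<Longrightarrow> 0 < sum \<mu> C"
  using game unfolding search_game_def by auto

lemma v_antimono:
  assumes "1 \<le> a" "a \<le> b" "b \<le> card (UNIV :: 'p set)"
  shows "v i b w \<le> v i a w"
  using assms(2,3)
proof (induction b rule: dec_induct)
  case (step n)
  then have "v i (n + 1) w \<le> v i n w"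
    using game assms(1) unfolding search_game_def by simp
  with step show ?case by simp
qed simp

lemma weighted_v_antimono:
  "1 \<le> a \<Longrightarrow> a \<le> b \<Longrightarrow> b \<le> card (UNIV :: 'p set) \<Longrightarrow> \<mu> w * v i b w \<le> \<mu> w * v i a w"
  using v_antimono mu_nonneg by (simp add: mult_left_mono)

lemma sum_over_cells: "(\<Sum>w\<in>UNIV. g w) = (\<Sum>C\<in>range (part i). \<Sum>w\<in>C. g w)"
proof -
  have "{w. part i w = C} = C" if "C \<in> range (part i)" for C
    using that part_eq_cell mem_part by blast
  then show ?thesis
    using sum.group[of UNIV "range (part i)" "part i" g] by simp
qed

definition cell_cost :: "'p \<Rightarrow> 'w set \<Rightarrow> nat \<Rightarrow> real" where
  "cell_cost i C k = sum \<mu> C * c i k"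

lemma convex_cell_cost: "convex_upto (cell_cost i C) (K i)"
proof -
  have "convex_upto (c i) (K i)"
    using game unfolding search_game_def convex_upto_def by auto
  then show ?thesis
    unfolding cell_cost_def using mu_nonneg by (intro convex_upto_scale) (auto intro: sum_nonneg)
qed

lemma finders_split:
  "finders part s w = card {j. j \<noteq> i \<and> w \<in> s j (part j w)} + of_bool (w \<in> s i (part i w))"
proof -
  have "{j. w \<in> s j (part j w)} =
      {j. j \<noteq> i \<and> w \<in> s j (part j w)} \<union> (if w \<in> s i (part i w) then {i} else {})"
    by auto
  then show ?thesis unfolding finders_def by (simp add: card_Un_disjoint)
qed

lemma finders_fun_upd:
  "finders part (s(i := \<sigma>)) w + of_bool (w \<in> s i (part i w)) = finders part s w + of_bool (w \<in> \<sigma> (part i w))"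
proof -
  have "{j. j \<noteq> i \<and> w \<in> (s(i := \<sigma>)) j (part j w)} = {j. j \<noteq> i \<and> w \<in> s j (part j w)}"
    by auto
  then show ?thesis using finders_split[of s w i] finders_split[of "s(i := \<sigma>)" w i] by simp
qed

lemma finders_le_card: "finders part s w \<le> card (UNIV :: 'p set)"
  unfolding finders_def by (rule card_mono) auto

lemma finders_less_card:
  assumes "w \<notin> s i (part i w)"
  shows "finders part s w < card (UNIV :: 'p set)"
proof -
  have "finders part s w \<le> card (UNIV - {i})"
    unfolding finders_def using assms by (intro card_mono) auto
  moreover have "0 < card (UNIV :: 'p set)" by (simp add: card_gt_0_iff)
  ultimately show ?thesis by (simp add: card_Diff_singleton)
qed

lemma one_le_finders: "w \<in> s i (part i w) \<Longrightarrow> 1 \<le> finders part s w"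
  unfolding finders_def by (auto simp: Suc_le_eq card_gt_0_iff)

lemma two_le_finders:
  assumes "i \<noteq> j" "w \<in> s i (part i w)" "w \<in> s j (part j w)"
  shows "2 \<le> finders part s w"
proof -
  have "card {i, j} \<le> finders part s w"
    unfolding finders_def using assms(2,3) by (intro card_mono) auto
  then show ?thesis using assms(1) by simp
qed

abbreviation update_cell ::
  "('p \<Rightarrow> 'w set \<Rightarrow> 'w set) \<Rightarrow> 'p \<Rightarrow> 'w set \<Rightarrow> 'w set \<Rightarrow> ('p \<Rightarrow> 'w set \<Rightarrow> 'w set)" where
  "update_cell s b C T \<equiv> s(b := (s b)(C := T))"

lemma finders_update_cell:
  assumes "C \<in> range (part b)" "s b C \<subseteq> C" "T \<subseteq> C"
  shows "finders part (update_cell s b C T) w + of_bool (w \<in> s b C) = finders part s w + of_bool (w \<in> T)"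
proof (cases "w \<in> C")
  case True
  then show ?thesis
    using finders_fun_upd[of s b "(s b)(C := T)" w] part_eq_cell[OF assms(1)] by simp
next
  case False
  then have "part b w \<noteq> C" using mem_part by metis
  then show ?thesis
    using finders_fun_upd[of s b "(s b)(C := T)" w] False assms(2,3) by auto
qed

definition feasible :: "('p \<Rightarrow> 'w set \<Rightarrow> nat) \<Rightarrow> ('p \<Rightarrow> 'w set \<Rightarrow> 'w set) \<Rightarrow> bool" where
  "feasible \<kappa> s \<longleftrightarrow> (\<forall>i. (\<forall>C\<in>range (part i). s i C \<subseteq> C \<and> card (s i C) \<le> \<kappa> i C) \<and>
     (\<forall>C. C \<notin> range (part i) \<longrightarrow> s i C = {}))"

lemma feasible_update_cell:
  "feasible \<kappa> s \<Longrightarrow> C \<in> range (part b) \<Longrightarrow> T \<subseteq> C \<Longrightarrow> card T \<le> \<kappa> b C \<Longrightarrow>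
    feasible \<kappa> (update_cell s b C T)"
  unfolding feasible_def by auto

lemma feasible_mono:
  "feasible \<kappa> s \<Longrightarrow> (\<And>i C. C \<in> range (part i) \<Longrightarrow> \<kappa> i C \<le> \<kappa>' i C) \<Longrightarrow> feasible \<kappa>' s"
  unfolding feasible_def by (meson le_trans)

lemma pure_profiles_iff_feasible: "s \<in> pure_profiles part K \<longleftrightarrow> feasible (\<lambda>i C. K i) s"
  unfolding pure_profiles_def pure_strategy_def feasible_def by auto

(* N w counts the searchers of w, player i included exactly when w \<in> S. *)
definition gain :: "'p \<Rightarrow> ('w \<Rightarrow> nat) \<Rightarrow> 'w set \<Rightarrow> 'w \<Rightarrow> real" where
  "gain i N S w = \<mu> w * v i (if w \<in> S then N w else Suc (N w)) w"

definition best_reply ::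
  "('p \<Rightarrow> 'w set \<Rightarrow> nat) \<Rightarrow> ('w \<Rightarrow> nat) \<Rightarrow> ('p \<Rightarrow> 'w set \<Rightarrow> 'w set) \<Rightarrow> 'p \<Rightarrow> 'w set \<Rightarrow> bool" where
  "best_reply \<kappa> N s i C \<longleftrightarrow> optimal_subset C (\<kappa> i C) (gain i N (s i C)) (cell_cost i C) (s i C)"

definition capacity_equilibrium :: "('p \<Rightarrow> 'w set \<Rightarrow> nat) \<Rightarrow> ('p \<Rightarrow> 'w set \<Rightarrow> 'w set) \<Rightarrow> bool" where
  "capacity_equilibrium \<kappa> s \<longleftrightarrow>
     feasible \<kappa> s \<and> (\<forall>i. \<forall>C\<in>range (part i). best_reply \<kappa> (finders part s) s i C)"

lemma gain_shift:
  "N' w + of_bool (w \<in> S) = N w + of_bool (w \<in> S') \<Longrightarrow> gain i N' S' w = gain i N S w"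
  unfolding gain_def by (cases "w \<in> S"; cases "w \<in> S'") auto

lemma best_reply_update_cell:
  assumes "C \<in> range (part b)" "feasible \<kappa> s" "T \<subseteq> C"
  shows "best_reply \<kappa> (finders part (update_cell s b C T)) (update_cell s b C T) b C \<longleftrightarrow>
    optimal_subset C (\<kappa> b C) (gain b (finders part s) (s b C)) (cell_cost b C) T"
proof -
  have "s b C \<subseteq> C" using assms(1,2) unfolding feasible_def by blast
  then have "gain b (finders part (update_cell s b C T)) T = gain b (finders part s) (s b C)"
    using finders_update_cell[OF assms(1) _ assms(3)] gain_shift by blast
  then show ?thesis unfolding best_reply_def by simp
qed

lemma best_reply_update_other:
  "(i, C) \<noteq> (b, D) \<Longrightarrow> best_reply \<kappa> N (update_cell s b D T) i C = best_reply \<kappa> N s i C"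
  unfolding best_reply_def by auto

lemma best_reply_extra_searcher:
  assumes "best_reply \<kappa> N s i C" "C \<in> range (part i)"
    and N: "\<And>w. finders part s w = N w + of_bool (w = h)" and "h \<notin> s i C"
  shows "best_reply \<kappa> (finders part s) s i C"
  unfolding best_reply_def
proof (rule optimal_subset_mono[OF assms(1)[unfolded best_reply_def]])
  show "gain i N (s i C) w \<le> gain i (finders part s) (s i C) w" if "w \<in> s i C" for w
    using that N[of w] \<open>h \<notin> s i C\<close> by (auto simp: gain_def)
  show "gain i (finders part s) (s i C) w \<le> gain i N (s i C) w" if "w \<in> C - s i C" for w
  proof (cases "w = h")
    case True
    have "Suc (finders part s h) \<le> card (UNIV :: 'p set)"
      using finders_less_card[of h s i] that True part_eq_cell[OF assms(2)] by auto
    then show ?thesis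
      using that True N[of h] by (auto simp: gain_def intro: weighted_v_antimono)
  qed (use that N[of w] in \<open>auto simp: gain_def\<close>)
qed simp

lemma best_reply_fewer_searchers:
  assumes "best_reply \<kappa> (finders part s) s i C"
    and N: "\<And>w. finders part s w = N w + of_bool (w = h)" and "h \<in> s i C" "1 \<le> N h"
  shows "best_reply \<kappa> N s i C"
  unfolding best_reply_def
proof (rule optimal_subset_mono[OF assms(1)[unfolded best_reply_def]])
  show "gain i (finders part s) (s i C) w \<le> gain i N (s i C) w" if "w \<in> s i C" for w
  proof (cases "w = h")
    case True
    then show ?thesis
      using that N[of h] finders_le_card[of s h] \<open>1 \<le> N h\<close>
      by (auto simp: gain_def intro: weighted_v_antimono)
  qed (use that N[of w] in \<open>auto simp: gain_def\<close>)
  show "gain i N (s i C) w \<le> gain i (finders part s) (s i C) w" if "w \<in> C - s i C" for w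
    using that N[of w] \<open>h \<in> s i C\<close> by (auto simp: gain_def)
qed simp

lemma payoff_fun_upd:
  assumes "\<forall>C\<in>range (part i). \<sigma> C \<subseteq> C"
  shows "payoff part \<mu> c v i (s(i := \<sigma>)) =
    (\<Sum>C\<in>range (part i). sum (gain i (finders part s) (s i C)) (\<sigma> C) - cell_cost i C (card (\<sigma> C)))"
proof -
  let ?s' = "s(i := \<sigma>)"
  have cell: "(\<Sum>w\<in>C. \<mu> w * ((if w \<in> ?s' i (part i w) then v i (finders part ?s' w) w else 0)
        - c i (card (?s' i (part i w)))))
      = sum (gain i (finders part s) (s i C)) (\<sigma> C) - cell_cost i C (card (\<sigma> C))"
    if C: "C \<in> range (part i)" for C
  proof -
    have finders': "finders part ?s' w = (if w \<in> s i C then finders part s w else Suc (finders part s w))"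
      if "w \<in> \<sigma> C" for w
    proof -
      have "part i w = C" using that assms C part_eq_cell by blast
      then show ?thesis using finders_fun_upd[of s i \<sigma> w] that by auto
    qed
    have "(\<Sum>w\<in>C. \<mu> w * ((if w \<in> ?s' i (part i w) then v i (finders part ?s' w) w else 0)
        - c i (card (?s' i (part i w)))))
      = (\<Sum>w\<in>C. (if w \<in> \<sigma> C then \<mu> w * v i (finders part ?s' w) w else 0) - \<mu> w * c i (card (\<sigma> C)))"
      using part_eq_cell[OF C] by (intro sum.cong) (auto simp: algebra_simps)
    also have "\<dots> = (\<Sum>w\<in>C. if w \<in> \<sigma> C then \<mu> w * v i (finders part ?s' w) w else 0)
        - sum \<mu> C * c i (card (\<sigma> C))"
      by (simp add: sum_subtractf sum_distrib_right)
    also have "\<dots> = sum (gain i (finders part s) (s i C)) (\<sigma> C) - cell_cost i C (card (\<sigma> C))"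
    proof -
      have "C \<inter> \<sigma> C = \<sigma> C" using assms C by blast
      then show ?thesis using finders' by (simp add: sum.inter_restrict[symmetric] gain_def cell_cost_def)
    qed
    finally show ?thesis .
  qed
  show ?thesis unfolding payoff_def sum_over_cells[of _ i] using cell by (intro sum.cong) auto
qed

lemma pure_nash_if_capacity_equilibrium:
  assumes "capacity_equilibrium (\<lambda>i C. K i) s"
  shows "pure_nash part \<mu> K c v s"
  unfolding pure_nash_def
proof (intro conjI allI impI)
  have feas: "feasible (\<lambda>i C. K i) s"
    and best: "\<And>i C. C \<in> range (part i) \<Longrightarrow> best_reply (\<lambda>i C. K i) (finders part s) s i C"
    using assms unfolding capacity_equilibrium_def by auto
  then show "s \<in> pure_profiles part K" using pure_profiles_iff_feasible by blast
  fix i \<sigma> assume "pure_strategy part K i \<sigma>"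
  then have \<sigma>: "\<sigma> C \<subseteq> C" "card (\<sigma> C) \<le> K i" if "C \<in> range (part i)" for C
    using that unfolding pure_strategy_def by auto
  have "payoff part \<mu> c v i (s(i := \<sigma>)) =
      (\<Sum>C\<in>range (part i). sum (gain i (finders part s) (s i C)) (\<sigma> C) - cell_cost i C (card (\<sigma> C)))"
    using \<sigma> by (intro payoff_fun_upd) auto
  also have "\<dots> \<le> (\<Sum>C\<in>range (part i). sum (gain i (finders part s) (s i C)) (s i C) - cell_cost i C (card (s i C)))"
    using best \<sigma> unfolding best_reply_def optimal_subset_def by (intro sum_mono) auto
  also have "\<dots> = payoff part \<mu> c v i (s(i := s i))"
    using feas unfolding feasible_def by (intro payoff_fun_upd[symmetric]) auto
  finally show "payoff part \<mu> c v i (s(i := \<sigma>)) \<le> payoff part \<mu> c v i s" by simp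
qed

lemma social_payoff_mono:
  assumes "\<And>w. 1 \<le> finders part s w \<Longrightarrow> 1 \<le> finders part t w"
  shows "social_payoff part \<mu> vs s \<le> social_payoff part \<mu> vs t"
  unfolding social_payoff_def
  by (rule sum_mono) (use assms mu_nonneg vs_nonneg in auto)

lemma social_payoff_le_U_opt:
  "s \<in> pure_profiles part K \<Longrightarrow> social_payoff part \<mu> vs s \<le> U_opt part \<mu> K vs"
  unfolding U_opt_def by (rule Max_ge) auto

lemma social_payoff_move_searcher:
  assumes "x \<noteq> y" "finders part s x = 1" "finders part s y = 0" "finders part t x = 0" "finders part t y = 1"
    and "\<And>w. w \<noteq> x \<Longrightarrow> w \<noteq> y \<Longrightarrow> finders part t w = finders part s w"
  shows "social_payoff part \<mu> vs t = social_payoff part \<mu> vs s - \<mu> x * vs x + \<mu> y * vs y"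
  unfolding social_payoff_def
  using sum_change_two[of UNIV x y "\<lambda>w. \<mu> w * vs w * (if 1 \<le> finders part s w then 1 else 0)"
      "\<lambda>w. \<mu> w * vs w * (if 1 \<le> finders part t w then 1 else 0)"] assms
  by simp

section \<open>Improvement paths\<close>

definition within_capacity :: "('p \<Rightarrow> 'w set \<Rightarrow> nat) \<Rightarrow> bool" where
  "within_capacity \<kappa> \<longleftrightarrow> (\<forall>i. \<forall>C\<in>range (part i). \<kappa> i C \<le> K i)"

definition potential :: "('w \<Rightarrow> nat) \<Rightarrow> ('p \<Rightarrow> 'w set \<Rightarrow> 'w set) \<Rightarrow> real" where
  "potential N s = (\<Sum>i\<in>UNIV. \<Sum>C\<in>range (part i). \<Sum>w\<in>s i C. \<mu> w * v i (Suc (N w)) w)"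

lemma potential_update_cell:
  assumes "C \<in> range (part b)"
  shows "potential N (update_cell s b C T) =
    potential N s - (\<Sum>w\<in>s b C. \<mu> w * v b (Suc (N w)) w) + (\<Sum>w\<in>T. \<mu> w * v b (Suc (N w)) w)"
  using sum_sum_fun_upd[of UNIV b "\<lambda>i. range (part i)" C "\<lambda>i S. \<Sum>w\<in>S. \<mu> w * v i (Suc (N w)) w" s T] assms
  unfolding potential_def by (simp add: algebra_simps)

(* Location h carries one searcher more than the reference counts N: player m, who added it,
   best-responds to the actual counts, everybody else to N. *)
definition perturbed_equilibrium ::
  "('w \<Rightarrow> nat) \<Rightarrow> ('p \<Rightarrow> 'w set \<Rightarrow> nat) \<Rightarrow> ('p \<Rightarrow> 'w set \<Rightarrow> 'w set) \<Rightarrow> 'w \<Rightarrow> 'p \<Rightarrow> bool" where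
  "perturbed_equilibrium N \<kappa> s h m \<longleftrightarrow> feasible \<kappa> s \<and> h \<in> s m (part m h) \<and>
     (\<forall>w. finders part s w = N w + of_bool (w = h)) \<and>
     best_reply \<kappa> (finders part s) s m (part m h) \<and>
     (\<forall>i. \<forall>C\<in>range (part i). (i, C) \<noteq> (m, part m h) \<longrightarrow> best_reply \<kappa> N s i C)"

lemma perturbed_equilibrium_settled:
  assumes pe: "perturbed_equilibrium N \<kappa> s h m"
    and others: "\<And>b. b \<noteq> m \<Longrightarrow> h \<in> s b (part b h) \<Longrightarrow> best_reply \<kappa> (finders part s) s b (part b h)"
  shows "capacity_equilibrium \<kappa> s"
  unfolding capacity_equilibrium_def
proof (intro conjI ballI allI)
  show "feasible \<kappa> s" using pe unfolding perturbed_equilibrium_def by blast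
  fix i C assume C: "C \<in> range (part i)"
  show "best_reply \<kappa> (finders part s) s i C"
  proof (cases "(i, C) = (m, part m h)")
    case True
    then have "i = m" "C = part m h" by auto
    then show ?thesis using pe unfolding perturbed_equilibrium_def by blast
  next
    case False
    then have best: "best_reply \<kappa> N s i C"
      using pe C unfolding perturbed_equilibrium_def by blast
    have N: "\<And>w. finders part s w = N w + of_bool (w = h)"
      using pe unfolding perturbed_equilibrium_def by blast
    show ?thesis
    proof (cases "h \<in> s i C")
      case True
      have "s i C \<subseteq> C" using pe C unfolding perturbed_equilibrium_def feasible_def by blast
      then have "part i h = C" using part_eq_cell[OF C] True by blast
      then show ?thesis using others[of i] False True by auto
    qed (use best_reply_extra_searcher[OF best C N] in blast)
  qed
qed

lemma perturbed_equilibrium_best_reply_others: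
  assumes pe: "perturbed_equilibrium N \<kappa> s h m" and "b \<noteq> m" "h \<in> s b (part b h)"
    and C: "C \<in> range (part i)" "(i, C) \<noteq> (b, part b h)"
  shows "best_reply \<kappa> N (update_cell s b (part b h) T) i C"
proof -
  have N: "\<And>w. finders part s w = N w + of_bool (w = h)" and hm: "h \<in> s m (part m h)"
    using pe unfolding perturbed_equilibrium_def by auto
  have "best_reply \<kappa> N s i C"
  proof (cases "(i, C) = (m, part m h)")
    case True
    have "2 \<le> finders part s h"
      using two_le_finders[where s = s, OF \<open>b \<noteq> m\<close> \<open>h \<in> s b (part b h)\<close> hm] .
    then have "1 \<le> N h" using N[of h] by simp
    moreover have "best_reply \<kappa> (finders part s) s m (part m h)"
      using pe unfolding perturbed_equilibrium_def by blast
    ultimately show ?thesis using best_reply_fewer_searchers[OF _ N hm] True by auto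
  next
    case False
    then show ?thesis using pe C unfolding perturbed_equilibrium_def by blast
  qed
  then show ?thesis using best_reply_update_other[OF C(2)] by simp
qed

lemma perturbed_equilibrium_drop:
  assumes pe: "perturbed_equilibrium N \<kappa> s h m" and "b \<noteq> m"
    and C: "C \<in> range (part b)" and "h \<in> s b C"
    and opt: "optimal_subset C (\<kappa> b C) (gain b (finders part s) (s b C)) (cell_cost b C) (s b C - {h})"
  shows "finders part (update_cell s b C (s b C - {h})) = N" (is "finders part ?s' = N")
    and "capacity_equilibrium \<kappa> (update_cell s b C (s b C - {h}))"
proof -
  have feas: "feasible \<kappa> s" and N: "\<And>w. finders part s w = N w + of_bool (w = h)"
    using pe unfolding perturbed_equilibrium_def by blast+
  have sub: "s b C \<subseteq> C" using feas C unfolding feasible_def by blast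
  have hC: "part b h = C" using sub \<open>h \<in> s b C\<close> part_eq_cell[OF C] by blast
  show fin: "finders part ?s' = N"
  proof
    fix w show "finders part ?s' w = N w"
      using finders_update_cell[where s = s, OF C sub, of "s b C - {h}" w] N[of w] \<open>h \<in> s b C\<close> sub
      by (cases "w = h") auto
  qed
  show "capacity_equilibrium \<kappa> ?s'"
    unfolding capacity_equilibrium_def fin
  proof (intro conjI ballI allI)
    show "feasible \<kappa> ?s'"
      using opt unfolding optimal_subset_def by (intro feasible_update_cell[OF feas C]) auto
    fix i D assume D: "D \<in> range (part i)"
    show "best_reply \<kappa> N ?s' i D"
    proof (cases "(i, D) = (b, C)")
      case True
      then show ?thesis using best_reply_update_cell[OF C feas, of "s b C - {h}"] opt fin sub by auto
    next
      case False
      then show ?thesis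
        using perturbed_equilibrium_best_reply_others[OF pe \<open>b \<noteq> m\<close> _ D] hC \<open>h \<in> s b C\<close> by auto
    qed
  qed
qed

lemma perturbed_equilibrium_exchange:
  assumes pe: "perturbed_equilibrium N \<kappa> s h m" and "b \<noteq> m"
    and C: "C \<in> range (part b)" and "h \<in> s b C" and y: "y \<in> C - s b C"
    and opt: "optimal_subset C (\<kappa> b C) (gain b (finders part s) (s b C)) (cell_cost b C)
      (insert y (s b C - {h}))"
  shows "perturbed_equilibrium N \<kappa> (update_cell s b C (insert y (s b C - {h}))) y b"
proof -
  let ?T = "insert y (s b C - {h})"
  let ?s' = "update_cell s b C ?T"
  have feas: "feasible \<kappa> s" and N: "\<And>w. finders part s w = N w + of_bool (w = h)"
    using pe unfolding perturbed_equilibrium_def by blast+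
  have sub: "s b C \<subseteq> C" using feas C unfolding feasible_def by blast
  have hC: "part b h = C" and yC: "part b y = C"
    using sub \<open>h \<in> s b C\<close> y part_eq_cell[OF C] by blast+
  have T: "?T \<subseteq> C" "card ?T \<le> \<kappa> b C" using opt unfolding optimal_subset_def by auto
  have fin: "finders part ?s' w = N w + of_bool (w = y)" for w
    using finders_update_cell[where s = s, OF C sub T(1), of w] N[of w] \<open>h \<in> s b C\<close> y
    by (cases "w = h"; cases "w = y") auto
  show ?thesis
    unfolding perturbed_equilibrium_def yC
  proof (intro conjI allI ballI impI)
    show "feasible \<kappa> ?s'" by (rule feasible_update_cell[OF feas C T])
    show "y \<in> ?s' b C" "finders part ?s' w = N w + of_bool (w = y)" for w
      using fin by auto
    show "best_reply \<kappa> (finders part ?s') ?s' b C"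
      using best_reply_update_cell[OF C feas T(1)] opt by simp
    show "best_reply \<kappa> N ?s' i D" if "D \<in> range (part i)" "(i, D) \<noteq> (b, C)" for i D
      using perturbed_equilibrium_best_reply_others[OF pe \<open>b \<noteq> m\<close> _ that(1)] that(2) hC \<open>h \<in> s b C\<close>
      by auto
  qed
qed

lemma potential_exchange_increases:
  assumes pe: "perturbed_equilibrium N \<kappa> s h m"
    and C: "C \<in> range (part b)" and "h \<in> s b C" and y: "y \<in> C - s b C"
    and opt: "optimal_subset C (\<kappa> b C) (gain b (finders part s) (s b C)) (cell_cost b C)
      (insert y (s b C - {h}))"
    and not_best: "\<not> best_reply \<kappa> (finders part s) s b C"
  shows "potential N s < potential N (update_cell s b C (insert y (s b C - {h})))"
proof -
  define S where "S = s b C"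
  define T where "T = insert y (S - {h})"
  define f where "f = gain b (finders part s) S"
  let ?g = "\<lambda>w. \<mu> w * v b (Suc (N w)) w"
  have N: "\<And>w. finders part s w = N w + of_bool (w = h)" and feas: "feasible \<kappa> s"
    using pe unfolding perturbed_equilibrium_def by blast+
  have "S \<subseteq> C" "card S \<le> \<kappa> b C"
    using feas C unfolding S_def feasible_def by blast+
  then have S: "S \<subseteq> C" "card S \<le> \<kappa> b C" "finite S" "h \<in> S" "y \<notin> S"
    using \<open>h \<in> s b C\<close> y finite_subset unfolding S_def by auto
  have exchange_sum: "sum u T = sum u S - u h + u y" for u :: "'w \<Rightarrow> real"
    using S(3-5) unfolding T_def by (simp add: sum_diff1)
  have "card T = card S"
    using S(3-5) card_Suc_Diff1[of S h] unfolding T_def by simp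
  have "\<not> optimal_subset C (\<kappa> b C) f (cell_cost b C) S"
    using not_best unfolding best_reply_def f_def S_def .
  then have "\<exists>T'. T' \<subseteq> C \<and> card T' \<le> \<kappa> b C \<and>
      \<not> sum f T' - cell_cost b C (card T') \<le> sum f S - cell_cost b C (card S)"
    using S(1,2) unfolding optimal_subset_def by blast
  then obtain T' where T': "T' \<subseteq> C" "card T' \<le> \<kappa> b C"
      "sum f S - cell_cost b C (card S) < sum f T' - cell_cost b C (card T')"
    by (auto simp: not_le)
  have "sum f T' - cell_cost b C (card T') \<le> sum f T - cell_cost b C (card T)"
    using opt T'(1,2) unfolding optimal_subset_def f_def S_def T_def by blast
  then have "sum f S < sum f T" using T'(3) unfolding \<open>card T = card S\<close> by linarith
  then have "f h < f y" using exchange_sum[of f] by simp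
  moreover have "f h = ?g h" "f y = ?g y"
    using N[of h] N[of y] S(4,5) unfolding f_def gain_def by auto
  ultimately have "?g h < ?g y" by simp
  then show ?thesis
    using potential_update_cell[OF C, of N s T] exchange_sum[of ?g] unfolding S_def T_def by simp
qed

(* A player b \<noteq> m at h who no longer best-responds either drops h, which restores the counts N,
   or swaps h for some y, which moves the perturbation to y and increases the potential. *)
lemma perturbed_equilibrium_step:
  assumes cap: "within_capacity \<kappa>" and pe: "perturbed_equilibrium N \<kappa> s h m"
    and b: "b \<noteq> m" "h \<in> s b (part b h)"
    and not_best: "\<not> best_reply \<kappa> (finders part s) s b (part b h)"
  shows "(\<exists>s'. capacity_equilibrium \<kappa> s' \<and> finders part s' = N) \<or>
    (\<exists>s' y. perturbed_equilibrium N \<kappa> s' y b \<and> potential N s < potential N s')"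
proof -
  define C where "C = part b h"
  define f where "f = gain b (finders part s) (s b C)"
  have C: "C \<in> range (part b)" by (simp add: C_def)
  have hb: "h \<in> s b C" using b(2) unfolding C_def .
  have N: "\<And>w. finders part s w = N w + of_bool (w = h)"
    using pe unfolding perturbed_equilibrium_def by blast
  have "best_reply \<kappa> N s b C" using pe b(1) C unfolding perturbed_equilibrium_def by blast
  moreover have "f w = gain b N (s b C) w" if "w \<noteq> h" for w
    using N[of w] that by (simp add: f_def gain_def)
  moreover have "\<kappa> b C \<le> K b" using cap C unfolding within_capacity_def by blast
  ultimately have "optimal_subset C (\<kappa> b C) f (cell_cost b C) (s b C)
      \<or> optimal_subset C (\<kappa> b C) f (cell_cost b C) (s b C - {h})
      \<or> (\<exists>y\<in>C - s b C. optimal_subset C (\<kappa> b C) f (cell_cost b C) (insert y (s b C - {h})))"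
    unfolding best_reply_def by (intro optimal_subset_change_point[OF _ convex_cell_cost _ _ hb]) simp_all
  with not_best consider
      (drop) "optimal_subset C (\<kappa> b C) f (cell_cost b C) (s b C - {h})"
    | (exchange) y where "y \<in> C - s b C" "optimal_subset C (\<kappa> b C) f (cell_cost b C) (insert y (s b C - {h}))"
    unfolding best_reply_def C_def f_def by blast
  then show ?thesis
  proof cases
    case drop
    then show ?thesis using perturbed_equilibrium_drop[OF pe b(1) C hb] unfolding f_def by blast
  next
    case (exchange y)
    then show ?thesis
      using perturbed_equilibrium_exchange[OF pe b(1) C hb] potential_exchange_increases[OF pe C hb]
        not_best unfolding f_def C_def by blast
  qed
qed

lemma perturbed_equilibrium_resolves:
  assumes cap: "within_capacity \<kappa>" and "perturbed_equilibrium N \<kappa> s h m"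
  shows "\<exists>s'. capacity_equilibrium \<kappa> s' \<and> (\<forall>w. N w \<le> finders part s' w)"
  using assms(2)
proof (induction "card {t. potential N s < potential N t}" arbitrary: s h m rule: less_induct)
  case less
  note pe = less.prems
  show ?case
  proof (cases "\<forall>b. b \<noteq> m \<and> h \<in> s b (part b h) \<longrightarrow> best_reply \<kappa> (finders part s) s b (part b h)")
    case True
    then have "capacity_equilibrium \<kappa> s" using perturbed_equilibrium_settled[OF pe] by blast
    moreover have "\<forall>w. N w \<le> finders part s w" using pe unfolding perturbed_equilibrium_def by simp
    ultimately show ?thesis by blast
  next
    case False
    then obtain b where "b \<noteq> m" "h \<in> s b (part b h)" "\<not> best_reply \<kappa> (finders part s) s b (part b h)"
      by blast
    from perturbed_equilibrium_step[OF cap pe this] show ?thesis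
    proof (elim disjE exE conjE)
      fix s' y assume pe': "perturbed_equilibrium N \<kappa> s' y b" and "potential N s < potential N s'"
      then have "card {t. potential N s' < potential N t} < card {t. potential N s < potential N t}"
        by (intro psubset_card_mono) auto
      then show ?thesis using less.hyps pe' by blast
    qed auto
  qed
qed

definition raise_capacity :: "('p \<Rightarrow> 'w set \<Rightarrow> nat) \<Rightarrow> 'p \<Rightarrow> 'w set \<Rightarrow> ('p \<Rightarrow> 'w set \<Rightarrow> nat)" where
  "raise_capacity \<kappa> a C = \<kappa>(a := (\<kappa> a)(C := Suc (\<kappa> a C)))"

lemma best_reply_raise_capacity_other:
  "(i, D) \<noteq> (a, C) \<Longrightarrow> best_reply (raise_capacity \<kappa> a C) N s i D = best_reply \<kappa> N s i D"
  unfolding best_reply_def raise_capacity_def by auto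

lemma within_capacity_raise_capacity:
  "within_capacity \<kappa> \<Longrightarrow> \<kappa> a C < K a \<Longrightarrow> within_capacity (raise_capacity \<kappa> a C)"
  unfolding within_capacity_def raise_capacity_def by auto

lemma feasible_raise_capacity: "feasible \<kappa> s \<Longrightarrow> feasible (raise_capacity \<kappa> a C) s"
  by (rule feasible_mono) (auto simp: raise_capacity_def)

lemma perturbed_equilibrium_add_location:
  assumes eq: "capacity_equilibrium \<kappa> s" and C: "C \<in> range (part a)" and y: "y \<in> C - s a C"
    and opt: "optimal_subset C (Suc (\<kappa> a C)) (gain a (finders part s) (s a C)) (cell_cost a C)
      (insert y (s a C))"
  shows "perturbed_equilibrium (finders part s) (raise_capacity \<kappa> a C)
    (update_cell s a C (insert y (s a C))) y a"
proof -
  let ?\<kappa>' = "raise_capacity \<kappa> a C"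
  let ?s' = "update_cell s a C (insert y (s a C))"
  have feas: "feasible ?\<kappa>' s" and best: "\<And>i D. D \<in> range (part i) \<Longrightarrow> best_reply \<kappa> (finders part s) s i D"
    using eq feasible_raise_capacity unfolding capacity_equilibrium_def by auto
  have sub: "s a C \<subseteq> C" using feas C unfolding feasible_def by blast
  have yC: "part a y = C" using y part_eq_cell[OF C] by blast
  show ?thesis
    unfolding perturbed_equilibrium_def yC
  proof (intro conjI allI ballI impI)
    show "feasible ?\<kappa>' ?s'"
      using opt unfolding optimal_subset_def
      by (intro feasible_update_cell[OF feas C]) (auto simp: raise_capacity_def)
    show "y \<in> ?s' a C" by simp
    show "finders part ?s' w = finders part s w + of_bool (w = y)" for w
      using finders_update_cell[where s = s, OF C sub, of "insert y (s a C)" w] y sub by auto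
    show "best_reply ?\<kappa>' (finders part ?s') ?s' a C"
      using best_reply_update_cell[OF C feas, of "insert y (s a C)"] y sub opt
      by (auto simp: raise_capacity_def)
    show "best_reply ?\<kappa>' (finders part s) ?s' i D" if "D \<in> range (part i)" "(i, D) \<noteq> (a, C)" for i D
      using best_reply_raise_capacity_other[OF that(2)] best_reply_update_other[OF that(2)] best[OF that(1)]
      by simp
  qed
qed

lemma capacity_equilibrium_raise_capacity:
  assumes cap: "within_capacity \<kappa>" and eq: "capacity_equilibrium \<kappa> s"
    and C: "C \<in> range (part a)" and "\<kappa> a C < K a"
  shows "\<exists>s'. capacity_equilibrium (raise_capacity \<kappa> a C) s' \<and> (\<forall>w. finders part s w \<le> finders part s' w)"
proof -
  define f where "f = gain a (finders part s) (s a C)"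
  have best: "\<And>i D. D \<in> range (part i) \<Longrightarrow> best_reply \<kappa> (finders part s) s i D"
    using eq unfolding capacity_equilibrium_def by auto
  then have opt: "optimal_subset C (\<kappa> a C) f (cell_cost a C) (s a C)"
    using C unfolding best_reply_def f_def by blast
  have "optimal_subset C (Suc (\<kappa> a C)) f (cell_cost a C) (s a C)
      \<or> (\<exists>y\<in>C - s a C. optimal_subset C (Suc (\<kappa> a C)) f (cell_cost a C) (insert y (s a C)))"
    by (rule optimal_subset_capacity_Suc[OF _ convex_cell_cost opt \<open>\<kappa> a C < K a\<close>]) simp
  then consider
      (keep) "optimal_subset C (Suc (\<kappa> a C)) f (cell_cost a C) (s a C)"
    | (add) y where "y \<in> C - s a C" "optimal_subset C (Suc (\<kappa> a C)) f (cell_cost a C) (insert y (s a C))"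
    by blast
  then show ?thesis
  proof cases
    case keep
    have "capacity_equilibrium (raise_capacity \<kappa> a C) s"
      unfolding capacity_equilibrium_def
    proof (intro conjI ballI allI)
      show "feasible (raise_capacity \<kappa> a C) s"
        using eq feasible_raise_capacity unfolding capacity_equilibrium_def by blast
      fix i D assume D: "D \<in> range (part i)"
      show "best_reply (raise_capacity \<kappa> a C) (finders part s) s i D"
      proof (cases "(i, D) = (a, C)")
        case True
        then show ?thesis using keep unfolding best_reply_def raise_capacity_def f_def by auto
      qed (use best_reply_raise_capacity_other best[OF D] in simp)
    qed
    then show ?thesis by blast
  next
    case (add y)
    then show ?thesis
      using perturbed_equilibrium_resolves[OF within_capacity_raise_capacity[OF cap \<open>\<kappa> a C < K a\<close>]
          perturbed_equilibrium_add_location[OF eq C]]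
      unfolding f_def by blast
  qed
qed

lemma capacity_equilibrium_full_capacity:
  assumes "within_capacity \<kappa>" "capacity_equilibrium \<kappa> s"
  shows "\<exists>s'. capacity_equilibrium (\<lambda>i C. K i) s' \<and> (\<forall>w. finders part s w \<le> finders part s' w)"
  using assms
proof (induction "\<Sum>i\<in>UNIV. \<Sum>C\<in>range (part i). K i - \<kappa> i C" arbitrary: \<kappa> s rule: less_induct)
  case less
  show ?case
  proof (cases "\<forall>i. \<forall>C\<in>range (part i). \<kappa> i C = K i")
    case True
    then have "capacity_equilibrium (\<lambda>i C. K i) s"
      using less.prems(2) unfolding capacity_equilibrium_def feasible_def best_reply_def by simp
    then show ?thesis by blast
  next
    case False
    then obtain a C where C: "C \<in> range (part a)" "\<kappa> a C \<noteq> K a" by blast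
    then have lt: "\<kappa> a C < K a" using less.prems(1) unfolding within_capacity_def by (meson le_neq_implies_less)
    let ?\<kappa>' = "raise_capacity \<kappa> a C"
    obtain s1 where s1: "capacity_equilibrium ?\<kappa>' s1" "\<forall>w. finders part s w \<le> finders part s1 w"
      using capacity_equilibrium_raise_capacity[OF less.prems C(1) lt] by blast
    have "(\<Sum>i\<in>UNIV. \<Sum>D\<in>range (part i). K i - ?\<kappa>' i D) + (K a - \<kappa> a C)
        = (\<Sum>i\<in>UNIV. \<Sum>D\<in>range (part i). K i - \<kappa> i D) + (K a - Suc (\<kappa> a C))"
      using sum_sum_fun_upd[of UNIV a "\<lambda>i. range (part i)" C "\<lambda>i k. K i - k" \<kappa> "Suc (\<kappa> a C)"] C(1)
      unfolding raise_capacity_def by simp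
    then have "(\<Sum>i\<in>UNIV. \<Sum>D\<in>range (part i). K i - ?\<kappa>' i D) < (\<Sum>i\<in>UNIV. \<Sum>D\<in>range (part i). K i - \<kappa> i D)"
      using lt by linarith
    from less.hyps[OF this within_capacity_raise_capacity[OF less.prems(1) lt] s1(1)] s1(2)
    show ?thesis by (meson order_trans)
  qed
qed

section \<open>A tie-broken social optimum\<close>

lemma solitary_search_dominant_cell:
  assumes "solitary_search_dominant part \<mu> K c v" "C \<in> range (part i)" "x \<in> C" "y \<in> C"
  shows "\<mu> y * v i 2 y \<le> \<mu> x * v i 1 x" and "sum \<mu> C * (c i (K i) - c i (K i - 1)) \<le> \<mu> x * v i 1 x"
proof -
  have M: "0 < sum \<mu> C" by (rule cell_mass_pos[OF assms(2)])
  have cp: "cond_prob part \<mu> i w = \<mu> w / sum \<mu> C" if "w \<in> C" for w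
    unfolding cond_prob_def using part_eq_cell[OF assms(2) that] by simp
  have "y \<in> part i x" using assms(2-4) part_eq_cell by blast
  then have ssd: "cond_prob part \<mu> i y * v i 2 y \<le> cond_prob part \<mu> i x * v i 1 x"
    "c i (K i) - c i (K i - 1) \<le> cond_prob part \<mu> i x * v i 1 x"
    using assms(1) unfolding solitary_search_dominant_def by blast+
  have scale: "\<mu> w * r = sum \<mu> C * (cond_prob part \<mu> i w * r)" if "w \<in> C" for w r
    using M cp[OF that] by simp
  have "\<mu> y * v i 2 y = sum \<mu> C * (cond_prob part \<mu> i y * v i 2 y)" by (rule scale[OF assms(4)])
  also have "\<dots> \<le> sum \<mu> C * (cond_prob part \<mu> i x * v i 1 x)" using ssd(1) M by (intro mult_left_mono) auto
  also have "\<dots> = \<mu> x * v i 1 x" by (rule scale[OF assms(3), symmetric])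
  finally show "\<mu> y * v i 2 y \<le> \<mu> x * v i 1 x" .
  have "sum \<mu> C * (c i (K i) - c i (K i - 1)) \<le> sum \<mu> C * (cond_prob part \<mu> i x * v i 1 x)"
    using ssd(2) M by (intro mult_left_mono) auto
  also have "\<dots> = \<mu> x * v i 1 x" by (rule scale[OF assms(3), symmetric])
  finally show "sum \<mu> C * (c i (K i) - c i (K i - 1)) \<le> \<mu> x * v i 1 x" .
qed

definition search_effort :: "('p \<Rightarrow> 'w set \<Rightarrow> 'w set) \<Rightarrow> nat" where
  "search_effort s = (\<Sum>i\<in>UNIV. \<Sum>C\<in>range (part i). card (s i C))"

definition optimum_rank :: "('p \<Rightarrow> 'w set \<Rightarrow> 'w set) \<Rightarrow> real \<times> real \<times> real" where
  "optimum_rank s = (social_payoff part \<mu> vs s, - real (search_effort s), potential (\<lambda>_. 0) s)"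

definition rank_maximal :: "('p \<Rightarrow> 'w set \<Rightarrow> 'w set) \<Rightarrow> bool" where
  "rank_maximal s \<longleftrightarrow> s \<in> pure_profiles part K \<and> (\<forall>t\<in>pure_profiles part K. optimum_rank t \<le> optimum_rank s)"

lemma search_effort_update_cell:
  "C \<in> range (part b) \<Longrightarrow> search_effort (update_cell s b C T) + card (s b C) = search_effort s + card T"
  using sum_sum_fun_upd[of UNIV b "\<lambda>i. range (part i)" C "\<lambda>i. card" s T] unfolding search_effort_def by simp

lemma empty_profile_pure: "(\<lambda>i C. {}) \<in> pure_profiles part K"
  unfolding pure_profiles_def pure_strategy_def by simp

lemma ex_rank_maximal: "\<exists>s. rank_maximal s"
  using ex_max_on_finite[of "pure_profiles part K" optimum_rank] empty_profile_pure
  unfolding rank_maximal_def by auto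

lemma rank_maximal_social_optimum:
  assumes "rank_maximal s"
  shows "social_payoff part \<mu> vs s = U_opt part \<mu> K vs"
proof -
  have "U_opt part \<mu> K vs \<in> social_payoff part \<mu> vs ` pure_profiles part K"
    unfolding U_opt_def using empty_profile_pure by (intro Max_in) auto
  then obtain t where "U_opt part \<mu> K vs = social_payoff part \<mu> vs t" "t \<in> pure_profiles part K"
    by (rule imageE)
  moreover from this(2) have "optimum_rank t \<le> optimum_rank s"
    using assms unfolding rank_maximal_def by blast
  ultimately have "U_opt part \<mu> K vs \<le> social_payoff part \<mu> vs s"
    unfolding optimum_rank_def by auto
  moreover have "social_payoff part \<mu> vs s \<le> U_opt part \<mu> K vs"
    using assms social_payoff_le_U_opt unfolding rank_maximal_def by blast
  ultimately show ?thesis by simp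
qed

lemma rank_maximal_finders_le_1:
  assumes max: "rank_maximal s"
  shows "finders part s w \<le> 1"
proof (rule ccontr)
  assume "\<not> finders part s w \<le> 1"
  then have two: "2 \<le> finders part s w" by simp
  then have "{j. w \<in> s j (part j w)} \<noteq> {}" unfolding finders_def by (metis card.empty not_numeral_le_zero)
  then obtain i where "w \<in> s i (part i w)" by blast
  define C where "C = part i w"
  let ?t = "update_cell s i C (s i C - {w})"
  have C: "C \<in> range (part i)" and wS: "w \<in> s i C" unfolding C_def using \<open>w \<in> s i (part i w)\<close> by auto
  have feas: "feasible (\<lambda>i C. K i) s" using max pure_profiles_iff_feasible unfolding rank_maximal_def by blast
  then have sub: "s i C \<subseteq> C" "card (s i C) \<le> K i" using C unfolding feasible_def by blast+
  then have "feasible (\<lambda>i C. K i) ?t"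
    using card_Diff1_le[of "s i C" w] by (intro feasible_update_cell[OF feas C]) auto
  then have "optimum_rank ?t \<le> optimum_rank s"
    using max pure_profiles_iff_feasible unfolding rank_maximal_def by blast
  moreover have "social_payoff part \<mu> vs s \<le> social_payoff part \<mu> vs ?t"
  proof (rule social_payoff_mono)
    fix w' show "1 \<le> finders part ?t w'" if "1 \<le> finders part s w'"
      using finders_update_cell[where s = s and w = w', OF C sub(1) Diff_subset[of "s i C" "{w}", THEN order_trans, OF sub(1)]]
        that two wS
      by (cases "w' = w") auto
  qed
  moreover have "search_effort ?t < search_effort s"
    using search_effort_update_cell[OF C, of s "s i C - {w}"] wS card_Diff1_less[of "s i C" w]
      finite_subset[OF sub(1)] by simp
  ultimately show False unfolding optimum_rank_def by auto
qed

lemma rank_maximal_finders_eq_1: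
  "rank_maximal s \<Longrightarrow> w \<in> s i (part i w) \<Longrightarrow> finders part s w = 1"
  using rank_maximal_finders_le_1 one_le_finders le_antisym by blast

lemma rank_maximal_no_better_solitary:
  assumes max: "rank_maximal s" and oc: "ordinally_consistent part \<mu> v vs"
    and C: "C \<in> range (part i)" and x: "x \<in> s i C" and y: "y \<in> C - s i C" "finders part s y = 0"
  shows "\<mu> y * v i 1 y \<le> \<mu> x * v i 1 x"
proof (rule ccontr)
  assume "\<not> ?thesis"
  then have better: "\<mu> x * v i 1 x < \<mu> y * v i 1 y" by simp
  define S where "S = s i C"
  define T where "T = insert y (S - {x})"
  let ?t = "update_cell s i C T"
  have feas: "feasible (\<lambda>i C. K i) s" using max pure_profiles_iff_feasible unfolding rank_maximal_def by blast
  then have sub: "S \<subseteq> C" "card S \<le> K i" using C unfolding feasible_def S_def by blast+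
  have xS: "x \<in> S" and yS: "y \<notin> S" "y \<in> C" and "finite S" "x \<in> C"
    using x y sub(1) finite_subset unfolding S_def by auto
  have xy: "x \<noteq> y" using xS yS by blast
  have cardT: "card T = card S" using xS yS \<open>finite S\<close> card_Suc_Diff1[of S x] unfolding T_def by simp
  have "T \<subseteq> C" using sub(1) xS yS unfolding T_def by auto
  have "x \<in> s i (part i x)" using x part_eq_cell[OF C \<open>x \<in> C\<close>] by simp
  then have "finders part s x = 1" by (rule rank_maximal_finders_eq_1[OF max])
  have fin: "finders part ?t w + of_bool (w \<in> S) = finders part s w + of_bool (w \<in> T)" for w
    using finders_update_cell[where s = s and T = T and w = w, OF C sub(1)[unfolded S_def] \<open>T \<subseteq> C\<close>]
    unfolding S_def .
  have "feasible (\<lambda>i C. K i) ?t"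
    using \<open>T \<subseteq> C\<close> sub cardT by (intro feasible_update_cell[OF feas C]) auto
  then have "optimum_rank ?t \<le> optimum_rank s"
    using max pure_profiles_iff_feasible unfolding rank_maximal_def by blast
  moreover have "social_payoff part \<mu> vs s \<le> social_payoff part \<mu> vs ?t"
  proof -
    have "y \<in> part i x" using part_eq_cell[OF C \<open>x \<in> C\<close>] yS(2) by simp
    then have "\<mu> x * vs x \<le> \<mu> y * vs y" using oc better unfolding ordinally_consistent_def by blast
    moreover have t0: "finders part ?t x = 0" "finders part ?t y = 1"
      using fin[of x] fin[of y] \<open>finders part s x = 1\<close> y(2) xS yS xy unfolding T_def by auto
    have "finders part ?t w = finders part s w" if "w \<noteq> x" "w \<noteq> y" for w
      using fin[of w] that unfolding T_def by auto
    moreover from social_payoff_move_searcher[OF xy \<open>finders part s x = 1\<close> y(2) t0 this]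
    have "social_payoff part \<mu> vs ?t = social_payoff part \<mu> vs s - \<mu> x * vs x + \<mu> y * vs y" .
    ultimately show ?thesis by simp
  qed
  moreover have "search_effort ?t = search_effort s"
    using search_effort_update_cell[OF C, of s T] cardT unfolding S_def by simp
  moreover have "potential (\<lambda>_. 0) s < potential (\<lambda>_. 0) ?t"
  proof -
    have "sum u T = sum u S - u x + u y" for u :: "'w \<Rightarrow> real"
      using xS yS \<open>finite S\<close> unfolding T_def by (simp add: sum_diff1)
    then show ?thesis using potential_update_cell[OF C, of "\<lambda>_. 0" s T] better unfolding S_def by simp
  qed
  ultimately show False unfolding optimum_rank_def by auto
qed

lemma rank_maximal_gain_searched:
  assumes "rank_maximal s" "C \<in> range (part i)" "x \<in> s i C"
  shows "gain i (finders part s) (s i C) x = \<mu> x * v i 1 x"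
proof -
  have "s i C \<subseteq> C"
    using assms(1,2) pure_profiles_iff_feasible unfolding rank_maximal_def feasible_def by blast
  then have "part i x = C" using assms(3) by (intro part_eq_cell[OF assms(2)]) blast
  then have "finders part s x = 1" using rank_maximal_finders_eq_1[OF assms(1), of x i] assms(3) by simp
  then show ?thesis using assms(3) unfolding gain_def by simp
qed

lemma rank_maximal_gain_unsearched:
  assumes max: "rank_maximal s" and oc: "ordinally_consistent part \<mu> v vs"
    and ssd: "solitary_search_dominant part \<mu> K c v"
    and C: "C \<in> range (part i)" and x: "x \<in> s i C" and y: "y \<in> C - s i C"
  shows "gain i (finders part s) (s i C) y \<le> \<mu> x * v i 1 x"
proof -
  have "s i C \<subseteq> C" using max C pure_profiles_iff_feasible unfolding rank_maximal_def feasible_def by blast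
  then have "x \<in> C" using x by blast
  have "finders part s y \<le> 1" by (rule rank_maximal_finders_le_1[OF max])
  then consider "finders part s y = 0" | "finders part s y = 1" by linarith
  then show ?thesis
  proof cases
    case 1
    then show ?thesis using rank_maximal_no_better_solitary[OF max oc C x y] y unfolding gain_def by simp
  next
    case 2
    then show ?thesis
      using solitary_search_dominant_cell(1)[OF ssd C \<open>x \<in> C\<close>] y unfolding gain_def by (simp add: numeral_2_eq_2)
  qed
qed

lemma rank_maximal_capacity_equilibrium:
  assumes max: "rank_maximal s" and oc: "ordinally_consistent part \<mu> v vs"
    and ssd: "solitary_search_dominant part \<mu> K c v"
  shows "capacity_equilibrium (\<lambda>i C. card (s i C)) s"
  unfolding capacity_equilibrium_def
proof (intro conjI allI ballI)
  have feas: "feasible (\<lambda>i C. K i) s" using max pure_profiles_iff_feasible unfolding rank_maximal_def by blast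
  then show "feasible (\<lambda>i C. card (s i C)) s" unfolding feasible_def by auto
  fix i C assume C: "C \<in> range (part i)"
  have sub: "s i C \<subseteq> C" "card (s i C) \<le> K i" using feas C unfolding feasible_def by blast+
  show "best_reply (\<lambda>i C. card (s i C)) (finders part s) s i C"
    unfolding best_reply_def
  proof (rule optimal_subsetI[OF _ convex_cell_cost sub(2) sub(1) order_refl])
    show "cell_cost i C (card (s i C)) - cell_cost i C (card (s i C) - 1) \<le> gain i (finders part s) (s i C) x"
      if "x \<in> s i C" for x
    proof -
      have "1 \<le> card (s i C)" using that sub(1) finite_subset by (auto simp: Suc_le_eq card_gt_0_iff)
      then have "cell_cost i C (card (s i C)) - cell_cost i C (card (s i C) - 1)
          \<le> cell_cost i C (K i) - cell_cost i C (K i - 1)"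
        using convex_upto_increment_mono[OF convex_cell_cost] sub(2) by blast
      also have "\<dots> = sum \<mu> C * (c i (K i) - c i (K i - 1))"
        unfolding cell_cost_def by (simp add: right_diff_distrib)
      also have "\<dots> \<le> \<mu> x * v i 1 x"
        using solitary_search_dominant_cell(2)[OF ssd C] that sub(1) by blast
      finally show ?thesis using rank_maximal_gain_searched[OF max C that] by simp
    qed
    show "gain i (finders part s) (s i C) y \<le> gain i (finders part s) (s i C) x"
      if "x \<in> s i C" "y \<in> C - s i C" for x y
      using rank_maximal_gain_unsearched[OF max oc ssd C that] rank_maximal_gain_searched[OF max C that(1)]
      by simp
  qed simp_all
qed

end

theorem theorem1:
  fixes part :: "'p::finite \<Rightarrow> 'w::finite \<Rightarrow> 'w set"
    and \<mu> :: "'w \<Rightarrow> real" and K :: "'p \<Rightarrow> nat" and c :: "'p \<Rightarrow> nat \<Rightarrow> real"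
    and v :: "'p \<Rightarrow> nat \<Rightarrow> 'w \<Rightarrow> real" and vs :: "'w \<Rightarrow> real"
  assumes "search_game part \<mu> K c v vs"
    and "ordinally_consistent part \<mu> v vs"
    and "solitary_search_dominant part \<mu> K c v"
  shows "\<exists>s. pure_nash part \<mu> K c v s \<and> social_payoff part \<mu> vs s = U_opt part \<mu> K vs"
proof -
  interpret search_game_setting part \<mu> K c v vs by (rule search_game_setting.intro) (rule assms(1))
  obtain s0 where s0: "rank_maximal s0" using ex_rank_maximal by blast
  have "within_capacity (\<lambda>i C. card (s0 i C))"
    using s0 pure_profiles_iff_feasible unfolding rank_maximal_def feasible_def within_capacity_def by blast
  then obtain s where s: "capacity_equilibrium (\<lambda>i C. K i) s" "\<forall>w. finders part s0 w \<le> finders part s w"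
    using capacity_equilibrium_full_capacity rank_maximal_capacity_equilibrium[OF s0 assms(2,3)] by blast
  have nash: "pure_nash part \<mu> K c v s" by (rule pure_nash_if_capacity_equilibrium[OF s(1)])
  have "U_opt part \<mu> K vs = social_payoff part \<mu> vs s0" using rank_maximal_social_optimum[OF s0] by simp
  also have "\<dots> \<le> social_payoff part \<mu> vs s" using s(2) by (intro social_payoff_mono) (meson order_trans)
  also have "\<dots> \<le> U_opt part \<mu> K vs" using nash social_payoff_le_U_opt unfolding pure_nash_def by blast
  finally show ?thesis using nash by auto
qed

end
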